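(* Let $d\ge2$ and let $\{T(e)\}$ be i.i.d. with values in $[0,\infty]$ and common law $\mathcal{L}$ on the edges of $\mathbb{Z}^d$. Assume $\mathcal{L}(\{0\})<p_c$. Then with probability one, for all $x,y\in\mathbb{Z}^d$ with $(x,y)\in\mathfrak{C}$, there exists a geodesic between $x$ and $y$.
   Context: $p_c$ is the critical probability of Bernoulli bond percolation on $\mathbb{Z}^d$. Passage time of a path is the sum of the passage times of its edges; $t(x,y)=\inf\{T(\pi):\pi\text{ path from }x\text{ to }y\}$; $\mathfrak{C}=\{(x,y):t(x,y)<\infty\}$. A geodesic between $x$ and $y$ is a self-avoiding path $\gamma$ from $x$ to $y$ with $T(\gamma)=t(x,y)$. *)

theory Defs
  imports "HOL-Probability.Probability"
begin

text \<open>The lattice Z^d, with d = CARD('d), vertices int ^ 'd.\<close>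

definition lattice_adj :: "int ^ ('d::finite) \<Rightarrow> int ^ 'd \<Rightarrow> bool" where
  "lattice_adj x y \<longleftrightarrow> (\<Sum>i\<in>UNIV. \<bar>x $ i - y $ i\<bar>) = 1"

definition lattice_edges :: "(int ^ 'd) set set" where
  "lattice_edges = {{x, y} | x y. lattice_adj x y}"

definition lattice_path :: "(int ^ 'd) list \<Rightarrow> int ^ 'd \<Rightarrow> int ^ 'd \<Rightarrow> bool" where
  "lattice_path p x y \<longleftrightarrow> p \<noteq> [] \<and> hd p = x \<and> last p = y \<and>
     (\<forall>(u, v) \<in> set (zip p (tl p)). lattice_adj u v)"

definition path_edges :: "(int ^ 'd) list \<Rightarrow> (int ^ 'd) set list" where
  "path_edges p = map (\<lambda>(u, v). {u, v}) (zip p (tl p))"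

definition open_cluster :: "((int ^ 'd) set \<Rightarrow> bool) \<Rightarrow> (int ^ 'd) set" where
  "open_cluster \<omega> = {y. \<exists>p. lattice_path p 0 y \<and> (\<forall>e \<in> set (path_edges p). \<omega> e)}"

definition bond_perc_measure :: "('d::finite) itself \<Rightarrow> real \<Rightarrow> ((int ^ 'd) set \<Rightarrow> bool) measure" where
  "bond_perc_measure _ p = PiM (lattice_edges :: (int ^ 'd) set set) (\<lambda>_. measure_pmf (bernoulli_pmf p))"

definition perc_prob :: "('d::finite) itself \<Rightarrow> real \<Rightarrow> real" where
  "perc_prob d p = measure (bond_perc_measure d p)
      {\<omega> \<in> space (bond_perc_measure d p). infinite (open_cluster (\<omega> :: (int ^ 'd) set \<Rightarrow> bool))}"

definition crit_prob :: "('d::finite) itself \<Rightarrow> real" where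
  "crit_prob d = Sup {p. 0 \<le> p \<and> p \<le> 1 \<and> perc_prob d p = 0}"

definition path_time :: "((int ^ 'd) set \<Rightarrow> ennreal) \<Rightarrow> (int ^ 'd) list \<Rightarrow> ennreal" where
  "path_time T p = sum_list (map T (path_edges p))"

definition passage_time :: "((int ^ 'd) set \<Rightarrow> ennreal) \<Rightarrow> int ^ 'd \<Rightarrow> int ^ 'd \<Rightarrow> ennreal" where
  "passage_time T x y = (INF p \<in> {p. lattice_path p x y}. path_time T p)"

definition geodesic :: "((int ^ 'd) set \<Rightarrow> ennreal) \<Rightarrow> (int ^ 'd) list \<Rightarrow> int ^ 'd \<Rightarrow> int ^ 'd \<Rightarrow> bool" where
  "geodesic T g x y \<longleftrightarrow> lattice_path g x y \<and> distinct g \<and> path_time T g = passage_time T x y"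

end

theory Submission
  imports Defs
begin

text \<open>Call an edge fast if \<open>T(e) < \<delta>\<close>. As \<open>\<delta> \<down> 0\<close> the mass \<open>\<L>[0, \<delta>)\<close> decreases to
  \<open>\<L>{0} < p\<^sub>c\<close>, so for some \<open>\<delta> > 0\<close> the fast edges form Bernoulli bond percolation with a
  parameter \<open>q < p\<^sub>c\<close>. Coupling it with a parameter \<open>p > q\<close> of zero percolation probability and
  using translation invariance, almost surely every fast cluster is finite. On that event a path
  of passage time below \<open>t(x, y) + 1\<close> has fewer than \<open>(t(x, y) + 1) / \<delta>\<close> slow edges, so it stays
  inside a finite set made of boundedly many fast clusters and their neighbours. Hence only finitely
  many self-avoiding paths are candidates, and after loop erasure the cheapest of them is a geodesic.\<close>

section \<open>Lattice paths\<close>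

lemma successively_iff_zip_tl:
  "(\<forall>(u, v) \<in> set (zip p (tl p)). P u v) \<longleftrightarrow> successively P p"
  by (induction p rule: induct_list012) auto

lemma lattice_path_iff_successively:
  "lattice_path p x y \<longleftrightarrow> p \<noteq> [] \<and> hd p = x \<and> last p = y \<and> successively lattice_adj p"
  unfolding lattice_path_def successively_iff_zip_tl ..

lemma path_edges_simps [simp]:
  "path_edges [] = []"
  "path_edges [x] = []"
  "path_edges (x # u # p) = {x, u} # path_edges (u # p)"
  by (simp_all add: path_edges_def)

lemma path_edges_append_middle:
  "path_edges (p @ v # q) = path_edges (p @ [v]) @ path_edges (v # q)"
  by (induction p rule: induct_list012) auto

lemma path_edges_map: "path_edges (map f p) = map ((`) f) (path_edges p)"
  by (induction p rule: induct_list012) auto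

lemma path_time_append_middle:
  "path_time w (p @ v # q) = path_time w (p @ [v]) + path_time w (v # q)"
  unfolding path_time_def by (subst path_edges_append_middle) simp

lemma lattice_adj_commute: "lattice_adj x y \<longleftrightarrow> lattice_adj y x"
  unfolding lattice_adj_def by (simp add: abs_minus_commute)

lemma lattice_adj_translate: "lattice_adj (x + a) (y + a) \<longleftrightarrow> lattice_adj x y"
  unfolding lattice_adj_def by simp

lemma path_edges_subset_lattice_edges:
  assumes "lattice_path p x y"
  shows "set (path_edges p) \<subseteq> lattice_edges"
proof -
  have "successively lattice_adj p"
    using assms by (simp add: lattice_path_iff_successively)
  then show ?thesis
    by (induction p rule: induct_list012) (auto simp: lattice_edges_def)
qed

lemma lattice_path_Cons:
  assumes "lattice_path p u y" and "lattice_adj x u"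
  shows "lattice_path (x # p) x y" and "path_edges (x # p) = {x, u} # path_edges p"
  using assms by (cases p; simp add: lattice_path_iff_successively)+

lemma finite_lattice_box: "finite {y :: int ^ 'd::finite. \<forall>i. \<bar>y $ i - c $ i\<bar> \<le> r}"
proof -
  have "{y. \<forall>i. \<bar>y $ i - c $ i\<bar> \<le> r} \<subseteq> vec_lambda ` (PiE UNIV (\<lambda>i. {c $ i - r .. c $ i + r}))"
  proof
    fix y :: "int ^ 'd"
    assume "y \<in> {y. \<forall>i. \<bar>y $ i - c $ i\<bar> \<le> r}"
    then have bound: "\<bar>y $ i - c $ i\<bar> \<le> r" for i
      by simp
    have "y $ i \<in> {c $ i - r .. c $ i + r}" for i
      using bound[of i] by (simp add: abs_le_iff)
    then have "(\<lambda>i. y $ i) \<in> PiE UNIV (\<lambda>i. {c $ i - r .. c $ i + r})"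
      by auto
    then show "y \<in> vec_lambda ` (PiE UNIV (\<lambda>i. {c $ i - r .. c $ i + r}))"
      by (rule rev_image_eqI) simp
  qed
  then show ?thesis
    by (rule finite_subset) (intro finite_imageI finite_PiE; simp)
qed

lemma finite_lattice_neighbours: "finite {u. lattice_adj (v :: int ^ 'd::finite) u}"
proof -
  have "\<bar>u $ i - v $ i\<bar> \<le> 1" if "lattice_adj v u" for u i
    using that member_le_sum[of i UNIV "\<lambda>i. \<bar>v $ i - u $ i\<bar>"]
    by (simp add: lattice_adj_def abs_minus_commute)
  then show ?thesis
    by (intro finite_subset[OF _ finite_lattice_box[of v 1]]) auto
qed

lemma lattice_path_remove_cycle:
  assumes "lattice_path (p1 @ v # p2 @ v # p3) x y"
  shows "lattice_path (p1 @ v # p3) x y"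
    and "path_time w (p1 @ v # p3) \<le> path_time w (p1 @ v # p2 @ v # p3)"
proof -
  have walk: "successively lattice_adj (p1 @ v # p2 @ v # p3)"
    "hd (p1 @ v # p2 @ v # p3) = x" "last (p1 @ v # p2 @ v # p3) = y"
    using assms by (simp_all only: lattice_path_iff_successively)
  have "successively lattice_adj ((p1 @ [v]) @ (p2 @ v # p3))"
    "successively lattice_adj ((p1 @ v # p2) @ (v # p3))"
    using walk(1) by simp_all
  then have "successively lattice_adj (p1 @ [v])" "successively lattice_adj (v # p3)"
    by (metis successively_append_iff)+
  moreover have "hd (p1 @ v # p3) = x"
    using walk(2) by (simp add: hd_append split: if_splits)
  moreover have "last (p1 @ v # p3) = y"
    using walk(3) by (simp add: last_append)
  ultimately show "lattice_path (p1 @ v # p3) x y"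
    unfolding lattice_path_iff_successively
    by (cases p1 rule: rev_cases) (simp_all add: successively_append_iff)
  have "path_time w (p1 @ v # p2 @ v # p3)
      = path_time w (p1 @ [v]) + path_time w (v # p2 @ [v]) + path_time w (v # p3)"
    using path_time_append_middle[of w p1 v "p2 @ v # p3"] path_time_append_middle[of w "v # p2" v p3]
    by (simp add: add.assoc)
  then show "path_time w (p1 @ v # p3) \<le> path_time w (p1 @ v # p2 @ v # p3)"
    unfolding path_time_append_middle[of w p1 v p3] by (simp add: add_right_mono)
qed

lemma lattice_path_loop_erasure:
  assumes "lattice_path p x y"
  obtains g where "lattice_path g x y" "distinct g" "path_time w g \<le> path_time w p"
  using assms
proof (induction "length p" arbitrary: p rule: less_induct)
  case less
  show ?case
  proof (cases "distinct p")
    case True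
    then show ?thesis
      using less.prems by blast
  next
    case False
    then obtain p1 v p2 p3 where p: "p = p1 @ v # p2 @ v # p3"
      using not_distinct_decomp by fastforce
    show ?thesis
    proof (rule less.hyps[of "p1 @ v # p3"])
      show "length (p1 @ v # p3) < length p" "lattice_path (p1 @ v # p3) x y"
        using lattice_path_remove_cycle(1) less.prems(2) unfolding p by auto
      fix g
      assume g: "lattice_path g x y" "distinct g" "path_time w g \<le> path_time w (p1 @ v # p3)"
      have "path_time w g \<le> path_time w p"
        using g(3) lattice_path_remove_cycle(2)[OF less.prems(2)[unfolded p]] unfolding p
        by (rule order_trans)
      then show thesis
        by (rule less.prems(1)[OF g(1,2)])
    qed
  qed
qed

section \<open>Fast clusters and geodesics\<close>

definition open_cluster_at :: "((int ^ 'd) set \<Rightarrow> bool) \<Rightarrow> int ^ 'd \<Rightarrow> (int ^ 'd::finite) set" where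
  "open_cluster_at \<omega> x = {y. \<exists>p. lattice_path p x y \<and> (\<forall>e \<in> set (path_edges p). \<omega> e)}"

lemma open_cluster_eq_open_cluster_at: "open_cluster \<omega> = open_cluster_at \<omega> 0"
  unfolding open_cluster_def open_cluster_at_def ..

lemma self_in_open_cluster_at: "x \<in> open_cluster_at \<omega> x"
proof -
  have "lattice_path [x] x x"
    by (simp add: lattice_path_iff_successively)
  then show ?thesis
    unfolding open_cluster_at_def by fastforce
qed

lemma open_cluster_at_Cons:
  assumes "y \<in> open_cluster_at \<omega> u" and "lattice_adj x u" and "\<omega> {x, u}"
  shows "y \<in> open_cluster_at \<omega> x"
proof -
  obtain p where p: "lattice_path p u y" "\<forall>e \<in> set (path_edges p). \<omega> e"
    using assms(1) unfolding open_cluster_at_def by blast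
  then have "lattice_path (x # p) x y" "\<forall>e \<in> set (path_edges (x # p)). \<omega> e"
    using lattice_path_Cons[OF p(1) assms(2)] assms(3) by auto
  then show ?thesis
    unfolding open_cluster_at_def by blast
qed

lemma open_cluster_at_eq_if_open_edge:
  assumes "lattice_adj x u" and "\<omega> {x, u}"
  shows "open_cluster_at \<omega> u = open_cluster_at \<omega> x"
  using open_cluster_at_Cons[of _ \<omega> u x] open_cluster_at_Cons[of _ \<omega> x u] assms
  by (auto simp: lattice_adj_commute insert_commute)

lemma open_cluster_at_mono:
  assumes "\<forall>e \<in> lattice_edges. \<omega> e \<longrightarrow> \<omega>' e"
  shows "open_cluster_at \<omega> x \<subseteq> open_cluster_at \<omega>' x"
  using assms path_edges_subset_lattice_edges unfolding open_cluster_at_def by blast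

lemma open_cluster_at_restrict: "open_cluster_at (\<lambda>e \<in> lattice_edges. \<omega> e) x = open_cluster_at \<omega> x"
  by (intro equalityI open_cluster_at_mono) auto

text \<open>The vertices reachable from \<open>C\<close> by a walk that leaves the clusters \<open>cl\<close> at most
  \<open>n\<close> times, each time along a single lattice edge.\<close>

fun hops :: "(int ^ 'd \<Rightarrow> (int ^ 'd) set) \<Rightarrow> nat \<Rightarrow> (int ^ 'd::finite) set \<Rightarrow> (int ^ 'd) set" where
  "hops cl 0 C = C"
| "hops cl (Suc n) C = hops cl n C \<union> (\<Union>v\<in>C. \<Union>u\<in>{u. lattice_adj v u}. hops cl n (cl u))"

lemma finite_hops:
  assumes "\<And>u. finite (cl u)" and "finite C"
  shows "finite (hops cl n C)"
  using assms(2)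
proof (induction n arbitrary: C)
  case (Suc n)
  have "finite (\<Union>v\<in>C. \<Union>u\<in>{u. lattice_adj v u}. hops cl n (cl u))"
    using Suc assms(1) finite_lattice_neighbours by (intro finite_UN_I) auto
  then show ?case
    using Suc by simp
qed simp

lemma subset_hops: "C \<subseteq> hops cl n C"
  by (induction n) auto

lemma hops_mono: "n \<le> m \<Longrightarrow> hops cl n C \<subseteq> hops cl m C"
  by (induction m) (auto simp: le_Suc_eq)

definition slow_edge_count :: "((int ^ 'd) set \<Rightarrow> ennreal) \<Rightarrow> ennreal \<Rightarrow> (int ^ 'd) list \<Rightarrow> nat" where
  "slow_edge_count w \<delta> p = length (filter (\<lambda>e. \<delta> \<le> w e) (path_edges p))"

lemma slow_edge_count_mult_le_path_time: "of_nat (slow_edge_count w \<delta> p) * \<delta> \<le> path_time w p"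
proof -
  have "of_nat (length (filter (\<lambda>e. \<delta> \<le> w e) es)) * \<delta> \<le> sum_list (map w es)" for es
  proof (induction es)
    case (Cons e es)
    then show ?case
      by (cases "\<delta> \<le> w e") (auto simp: distrib_right intro: add_increasing add_mono)
  qed simp
  then show ?thesis
    unfolding slow_edge_count_def path_time_def .
qed

lemma set_path_subset_hops:
  assumes "lattice_path p x y"
  shows "set p \<subseteq> hops (open_cluster_at (\<lambda>e. w e < \<delta>)) (slow_edge_count w \<delta> p)
                   (open_cluster_at (\<lambda>e. w e < \<delta>) x)"
  using assms
proof (induction p arbitrary: x rule: induct_list012)
  case (2 x')
  then show ?case
    using self_in_open_cluster_at subset_hops by (fastforce simp: lattice_path_def)
next
  case (3 x' u p)
  let ?cl = "open_cluster_at (\<lambda>e. w e < \<delta>)"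
  have "x' = x" and adj: "lattice_adj x u" and path: "lattice_path (u # p) u y"
    using "3.prems" by (auto simp: lattice_path_iff_successively)
  have x_in: "x \<in> hops ?cl n (?cl x)" for n
    using self_in_open_cluster_at subset_hops by blast
  have IH: "set (u # p) \<subseteq> hops ?cl (slow_edge_count w \<delta> (u # p)) (?cl u)"
    using "3.IH"(2)[OF path] .
  show ?case
  proof (cases "w {x, u} < \<delta>")
    case True
    then have "slow_edge_count w \<delta> (x # u # p) = slow_edge_count w \<delta> (u # p)"
      by (simp add: slow_edge_count_def)
    moreover have "?cl u = ?cl x"
      using open_cluster_at_eq_if_open_edge[OF adj] True by simp
    ultimately show ?thesis
      using IH x_in \<open>x' = x\<close> by simp
  next
    case False
    then have "slow_edge_count w \<delta> (x # u # p) = Suc (slow_edge_count w \<delta> (u # p))"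
      by (simp add: slow_edge_count_def not_less)
    moreover have "hops ?cl (slow_edge_count w \<delta> (u # p)) (?cl u)
        \<subseteq> hops ?cl (Suc (slow_edge_count w \<delta> (u # p))) (?cl x)"
      using adj self_in_open_cluster_at[of x] by auto
    ultimately show ?thesis
      using IH x_in \<open>x' = x\<close> by auto
  qed
qed (simp add: lattice_path_def)

lemma finite_distinct_paths_below:
  fixes w :: "(int ^ 'd::finite) set \<Rightarrow> ennreal" and \<delta> :: real
  assumes "\<delta> > 0" and fast_finite: "\<And>z. finite (open_cluster_at (\<lambda>e. w e < ennreal \<delta>) z)"
    and "s < \<infinity>"
  shows "finite {g. lattice_path g x y \<and> distinct g \<and> path_time w g < s}"
proof -
  let ?cl = "open_cluster_at (\<lambda>e. w e < ennreal \<delta>)"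
  obtain r where r: "s = ennreal r" "r \<ge> 0"
    using \<open>s < \<infinity>\<close> by (cases s rule: ennreal_cases) auto
  obtain N :: nat where "r < of_nat N * \<delta>"
    using ex_less_of_nat_mult[OF \<open>\<delta> > 0\<close>] by blast
  then have "s < ennreal (of_nat N * \<delta>)"
    using r \<open>\<delta> > 0\<close> by (simp add: ennreal_less_iff)
  also have "\<dots> = of_nat N * ennreal \<delta>"
    using \<open>\<delta> > 0\<close> by (simp add: ennreal_mult ennreal_of_nat_eq_real_of_nat)
  finally have s_less: "s < of_nat N * ennreal \<delta>" .
  define V where "V = hops ?cl N (?cl x)"
  have "finite V"
    unfolding V_def using fast_finite by (intro finite_hops) auto
  have "set g \<subseteq> V" if g: "lattice_path g x y" "path_time w g < s" for g
  proof -
    have "of_nat (slow_edge_count w \<delta> g) * ennreal \<delta> < of_nat N * ennreal \<delta>"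
      using slow_edge_count_mult_le_path_time[of w \<delta> g] g(2) s_less by order
    then have "slow_edge_count w \<delta> g \<le> N"
    proof (rule contrapos_pp)
      assume "\<not> slow_edge_count w \<delta> g \<le> N"
      then have "of_nat N * ennreal \<delta> \<le> of_nat (slow_edge_count w \<delta> g) * ennreal \<delta>"
        by (intro mult_right_mono) auto
      then show "\<not> of_nat (slow_edge_count w \<delta> g) * ennreal \<delta> < of_nat N * ennreal \<delta>"
        by (simp add: not_less)
    qed
    then show ?thesis
      using set_path_subset_hops[OF g(1), of w "ennreal \<delta>"] hops_mono unfolding V_def by blast
  qed
  then have "{g. lattice_path g x y \<and> distinct g \<and> path_time w g < s} \<subseteq> {g. set g \<subseteq> V \<and> length g \<le> card V}"
    using \<open>finite V\<close> by (metis (no_types, lifting) card_mono distinct_card mem_Collect_eq subsetI)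
  then show ?thesis
    using finite_lists_length_le[OF \<open>finite V\<close>] by (rule finite_subset)
qed

lemma geodesic_exists_if_finite_near_optimal:
  assumes "passage_time w x y < s"
    and "finite {g. lattice_path g x y \<and> distinct g \<and> path_time w g < s}"
  shows "\<exists>g. geodesic w g x y"
proof -
  define S where "S = {g. lattice_path g x y \<and> distinct g \<and> path_time w g < s}"
  have erase: "\<exists>g\<in>S. path_time w g \<le> path_time w p"
    if path: "lattice_path p x y" and below: "path_time w p < s" for p
  proof -
    obtain g where "lattice_path g x y" "distinct g" "path_time w g \<le> path_time w p"
      using lattice_path_loop_erasure[OF path] by blast
    then show ?thesis
      using below unfolding S_def by (blast intro: order.strict_trans1)
  qed
  obtain p where "lattice_path p x y" "path_time w p < s"
    using assms(1) unfolding passage_time_def by (auto simp: INF_less_iff)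
  then have "S \<noteq> {}"
    using erase by blast
  then obtain g where "g \<in> S" and g_min: "\<And>h. h \<in> S \<Longrightarrow> path_time w g \<le> path_time w h"
    using ex_is_arg_min_if_finite[of S "path_time w"] assms(2) unfolding S_def is_arg_min_linorder
    by blast
  have "path_time w g \<le> path_time w p" if "lattice_path p x y" for p
  proof (cases "path_time w p < s")
    case True
    then show ?thesis
      using erase[OF that] g_min order_trans by blast
  next
    case False
    then show ?thesis
      using \<open>g \<in> S\<close> unfolding S_def by auto
  qed
  then have "path_time w g \<le> passage_time w x y"
    unfolding passage_time_def by (auto intro: INF_greatest)
  moreover have "passage_time w x y \<le> path_time w g"
    using \<open>g \<in> S\<close> unfolding passage_time_def S_def by (auto intro: INF_lower)
  ultimately have "path_time w g = passage_time w x y"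
    by (rule antisym)
  then show ?thesis
    using \<open>g \<in> S\<close> unfolding geodesic_def S_def by blast
qed

lemma geodesic_exists_if_fast_clusters_finite:
  fixes w :: "(int ^ 'd::finite) set \<Rightarrow> ennreal" and \<delta> :: real
  assumes "\<delta> > 0" and "\<And>z. finite (open_cluster_at (\<lambda>e. w e < ennreal \<delta>) z)"
    and "passage_time w x y < \<infinity>"
  shows "\<exists>g. geodesic w g x y"
proof (rule geodesic_exists_if_finite_near_optimal)
  show "passage_time w x y < passage_time w x y + 1"
    using assms(3) by simp
  show "finite {g. lattice_path g x y \<and> distinct g \<and> path_time w g < passage_time w x y + 1}"
    using assms by (intro finite_distinct_paths_below) auto
qed

section \<open>Bernoulli bond percolation\<close>

lemma countable_lattice_edges: "countable (lattice_edges :: (int ^ 'd::finite) set set)"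
proof -
  have "lattice_edges \<subseteq> (\<lambda>(x, y). {x, y}) ` (UNIV :: ((int ^ 'd) \<times> (int ^ 'd)) set)"
    unfolding lattice_edges_def by auto
  then show ?thesis
    by (rule countable_subset) simp
qed

lemma lattice_edges_nonempty: "(lattice_edges :: (int ^ 'd::finite) set set) \<noteq> {}"
proof -
  have "lattice_adj 0 (axis i 1 :: int ^ 'd)" for i
    by (simp add: lattice_adj_def axis_def if_distrib cong: if_cong)
  then show ?thesis
    unfolding lattice_edges_def by blast
qed

lemma prob_space_bond_perc_measure: "prob_space (bond_perc_measure d p)"
  unfolding bond_perc_measure_def by (intro prob_space_PiM prob_space_measure_pmf)

lemma space_bond_perc_measure:
  "space (bond_perc_measure TYPE('d::finite) p) = (lattice_edges :: (int ^ 'd) set set) \<rightarrow>\<^sub>E UNIV"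
  unfolding bond_perc_measure_def by (simp add: space_PiM)

lemma sets_bond_perc_measure:
  "sets (bond_perc_measure TYPE('d::finite) p)
     = sets (PiM (lattice_edges :: (int ^ 'd) set set) (\<lambda>_. count_space UNIV))"
  unfolding bond_perc_measure_def by (intro sets_PiM_cong) auto

lemma measurable_bond_perc_component [measurable]:
  "(\<lambda>\<omega>. \<omega> e) \<in> measurable (bond_perc_measure TYPE('d::finite) p) (count_space UNIV)"
proof (cases "e \<in> (lattice_edges :: (int ^ 'd) set set)")
  case True
  then have "(\<lambda>\<omega>. \<omega> e) \<in> measurable (bond_perc_measure TYPE('d) p) (measure_pmf (bernoulli_pmf p))"
    unfolding bond_perc_measure_def by (rule measurable_component_singleton)
  then show ?thesis
    by (simp add: measurable_cong_sets)
next
  case False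
  have undefined: "\<omega> e = undefined" if "\<omega> \<in> space (bond_perc_measure TYPE('d) p)" for \<omega>
    using that False unfolding space_bond_perc_measure by (rule PiE_arb)
  show ?thesis
    by (subst measurable_cong[OF undefined]) simp_all
qed

definition infinite_cluster_event :: "'d itself \<Rightarrow> real \<Rightarrow> int ^ 'd \<Rightarrow> ((int ^ 'd::finite) set \<Rightarrow> bool) set" where
  "infinite_cluster_event d p x = {\<omega> \<in> space (bond_perc_measure d p). infinite (open_cluster_at \<omega> x)}"

lemma perc_prob_eq_measure_infinite_cluster_event:
  "perc_prob d p = measure (bond_perc_measure d p) (infinite_cluster_event d p 0)"
  unfolding perc_prob_def infinite_cluster_event_def open_cluster_eq_open_cluster_at ..

lemma finite_iff_bounded_coordinates:
  "finite (S :: (int ^ 'd::finite) set) \<longleftrightarrow> (\<exists>n::nat. \<forall>y\<in>S. \<forall>i. \<bar>y $ i\<bar> \<le> int n)"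
proof
  assume "finite S"
  then have "finite ((\<lambda>(y, i). nat \<bar>y $ i\<bar>) ` (S \<times> UNIV))"
    by simp
  then obtain n where "\<forall>k \<in> (\<lambda>(y, i). nat \<bar>y $ i\<bar>) ` (S \<times> UNIV). k \<le> n"
    using finite_nat_set_iff_bounded_le by blast
  then have "nat \<bar>y $ i\<bar> \<le> n" if "y \<in> S" for y i
    using that by fastforce
  then show "\<exists>n::nat. \<forall>y\<in>S. \<forall>i. \<bar>y $ i\<bar> \<le> int n"
    by (auto simp: nat_le_iff)
next
  assume "\<exists>n::nat. \<forall>y\<in>S. \<forall>i. \<bar>y $ i\<bar> \<le> int n"
  then obtain n :: nat where "S \<subseteq> {y. \<forall>i. \<bar>y $ i - 0 $ i\<bar> \<le> int n}"
    by auto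
  then show "finite S"
    using finite_lattice_box finite_subset by blast
qed

lemma infinite_cluster_event_sets:
  "infinite_cluster_event TYPE('d::finite) p x \<in> sets (bond_perc_measure TYPE('d) p)"
proof -
  have event: "infinite_cluster_event TYPE('d) p x = {\<omega> \<in> space (bond_perc_measure TYPE('d) p).
      \<forall>n::nat. \<exists>y::int ^ 'd. (\<exists>q. lattice_path q x y \<and> (\<forall>e\<in>set (path_edges q). \<omega> e))
        \<and> (\<exists>i. int n < \<bar>y $ i\<bar>)}"
    unfolding infinite_cluster_event_def finite_iff_bounded_coordinates open_cluster_at_def
    by (simp add: not_le)
  show ?thesis
    unfolding event by measurable
qed

lemma distr_PiM_map_components:
  fixes N :: "'i \<Rightarrow> 'a measure" and K :: "'i \<Rightarrow> 'b measure"
  assumes "I \<noteq> {}" and N: "\<And>i. i \<in> I \<Longrightarrow> prob_space (N i)"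
    and f: "\<And>i. i \<in> I \<Longrightarrow> f i \<in> measurable (N i) (K i)"
  shows "distr (PiM I N) (PiM I K) (\<lambda>x. \<lambda>i\<in>I. f i (x i)) = PiM I (\<lambda>i. distr (N i) (K i) (f i))"
proof -
  interpret P: prob_space "PiM I N"
    using N by (rule prob_space_PiM)
  have component: "(\<lambda>x. x i) \<in> measurable (PiM I N) (N i)" if "i \<in> I" for i
    using that by (rule measurable_component_singleton)
  then have f_component: "(\<lambda>x. f i (x i)) \<in> measurable (PiM I N) (K i)" if "i \<in> I" for i
    using that f by measurable
  have distr_component: "distr (PiM I N) (N i) (\<lambda>x. x i) = N i" if "i \<in> I" for i
    using N that by (rule distr_PiM_component)
  have "distr (PiM I N) (PiM I N) (\<lambda>x. \<lambda>i\<in>I. x i) = PiM I N"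
    by (subst distr_cong[of _ _ _ _ _ "\<lambda>x. x"])
       (auto simp: space_PiM PiE_def extensional_def restrict_def fun_eq_iff)
  also have "\<dots> = PiM I (\<lambda>i. distr (PiM I N) (N i) (\<lambda>x. x i))"
    using distr_component by (intro PiM_cong) auto
  finally have "P.indep_vars N (\<lambda>i x. x i) I"
    using P.indep_vars_iff_distr_eq_PiM'[OF \<open>I \<noteq> {}\<close> component] by simp
  then have "P.indep_vars K (\<lambda>i x. f i (x i)) I"
    using f by (rule P.indep_vars_compose2)
  then have "distr (PiM I N) (PiM I K) (\<lambda>x. \<lambda>i\<in>I. f i (x i))
      = PiM I (\<lambda>i. distr (PiM I N) (K i) (\<lambda>x. f i (x i)))"
    using P.indep_vars_iff_distr_eq_PiM'[OF \<open>I \<noteq> {}\<close> f_component] by simp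
  also have "\<dots> = PiM I (\<lambda>i. distr (N i) (K i) (f i))"
  proof (intro PiM_cong refl)
    fix i
    assume "i \<in> I"
    then have "distr (PiM I N) (K i) (\<lambda>x. f i (x i)) = distr (distr (PiM I N) (N i) (\<lambda>x. x i)) (K i) (f i)"
      using distr_distr[OF f component] by (simp add: comp_def)
    then show "distr (PiM I N) (K i) (\<lambda>x. f i (x i)) = distr (N i) (K i) (f i)"
      using distr_component \<open>i \<in> I\<close> by simp
  qed
  finally show ?thesis .
qed

definition translate_edge :: "int ^ 'd \<Rightarrow> (int ^ 'd::finite) set \<Rightarrow> (int ^ 'd) set" where
  "translate_edge a = (`) (\<lambda>y. y + a)"

lemma translate_edge_in_lattice_edges: "e \<in> lattice_edges \<Longrightarrow> translate_edge a e \<in> lattice_edges"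
  unfolding lattice_edges_def translate_edge_def using lattice_adj_translate by fastforce

lemma translate_edge_neg [simp]:
  "translate_edge a (translate_edge (- a) e) = e"
  "translate_edge (- a) (translate_edge a e) = e"
  unfolding translate_edge_def by (auto simp: image_image)

lemma translate_mem_open_cluster_at:
  assumes "y \<in> open_cluster_at (\<lambda>e. \<omega> (translate_edge a e)) x"
  shows "y + a \<in> open_cluster_at \<omega> (x + a)"
proof -
  obtain q where q: "lattice_path q x y" "\<forall>e \<in> set (path_edges q). \<omega> (translate_edge a e)"
    using assms unfolding open_cluster_at_def by blast
  have "lattice_path (map (\<lambda>y. y + a) q) (x + a) (y + a)"
    using q(1) by (auto simp: lattice_path_iff_successively successively_map lattice_adj_translate hd_map last_map)
  moreover have "\<forall>e \<in> set (path_edges (map (\<lambda>y. y + a) q)). \<omega> e"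
    using q(2) unfolding path_edges_map translate_edge_def by auto
  ultimately show ?thesis
    unfolding open_cluster_at_def by blast
qed

lemma open_cluster_at_translate:
  "open_cluster_at \<omega> (x + a) = (\<lambda>y. y + a) ` open_cluster_at (\<lambda>e. \<omega> (translate_edge a e)) x"
proof
  show "(\<lambda>y. y + a) ` open_cluster_at (\<lambda>e. \<omega> (translate_edge a e)) x \<subseteq> open_cluster_at \<omega> (x + a)"
    using translate_mem_open_cluster_at by blast
  show "open_cluster_at \<omega> (x + a) \<subseteq> (\<lambda>y. y + a) ` open_cluster_at (\<lambda>e. \<omega> (translate_edge a e)) x"
  proof
    fix z
    assume "z \<in> open_cluster_at \<omega> (x + a)"
    then have "z \<in> open_cluster_at (\<lambda>e. \<omega> (translate_edge a (translate_edge (- a) e))) (x + a)"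
      by simp
    then have "z + - a \<in> open_cluster_at (\<lambda>e. \<omega> (translate_edge a e)) (x + a + - a)"
      by (rule translate_mem_open_cluster_at)
    then show "z \<in> (\<lambda>y. y + a) ` open_cluster_at (\<lambda>e. \<omega> (translate_edge a e)) x"
      by (intro image_eqI[of _ _ "z + - a"]) auto
  qed
qed

lemma measure_infinite_cluster_event_translate:
  "measure (bond_perc_measure TYPE('d::finite) p) (infinite_cluster_event TYPE('d) p a)
     = measure (bond_perc_measure TYPE('d) p) (infinite_cluster_event TYPE('d) p 0)"
proof -
  let ?E = "lattice_edges :: (int ^ 'd) set set"
  let ?B = "bond_perc_measure TYPE('d) p"
  define \<Psi> :: "((int ^ 'd) set \<Rightarrow> bool) \<Rightarrow> (int ^ 'd) set \<Rightarrow> bool"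
    where "\<Psi> \<omega> = (\<lambda>e\<in>?E. \<omega> (translate_edge a e))" for \<omega>
  have \<Psi>_measurable: "\<Psi> \<in> measurable ?B ?B"
    unfolding \<Psi>_def bond_perc_measure_def
    by (intro measurable_restrict measurable_component_singleton translate_edge_in_lattice_edges)
  have "inj_on (translate_edge a) ?E"
    by (metis inj_on_inverseI translate_edge_neg(2))
  then have \<Psi>_preserving: "distr ?B ?B \<Psi> = ?B"
    unfolding \<Psi>_def bond_perc_measure_def
    using distr_PiM_reindex[of ?E "\<lambda>_. measure_pmf (bernoulli_pmf p)" "translate_edge a" ?E]
    by (simp add: prob_space_measure_pmf translate_edge_in_lattice_edges)
  have "infinite (open_cluster_at \<omega> a) \<longleftrightarrow> infinite (open_cluster_at (\<Psi> \<omega>) 0)" for \<omega>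
    using open_cluster_at_translate[of \<omega> 0 a]
    by (simp add: \<Psi>_def open_cluster_at_restrict finite_image_iff)
  then have "infinite_cluster_event TYPE('d) p a = \<Psi> -` infinite_cluster_event TYPE('d) p 0 \<inter> space ?B"
    using measurable_space[OF \<Psi>_measurable] unfolding infinite_cluster_event_def by auto
  then show ?thesis
    using measure_distr[OF \<Psi>_measurable infinite_cluster_event_sets] \<Psi>_preserving by simp
qed

definition bernoulli_coupling :: "real \<Rightarrow> real \<Rightarrow> (bool \<times> bool) pmf" where
  "bernoulli_coupling q p =
     bind_pmf (bernoulli_pmf p) (\<lambda>b. map_pmf (\<lambda>a. (a \<and> b, b)) (bernoulli_pmf (q / p)))"

lemma map_snd_bernoulli_coupling: "map_pmf snd (bernoulli_coupling q p) = bernoulli_pmf p"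
  unfolding bernoulli_coupling_def by (simp add: map_bind_pmf map_pmf_comp bind_return_pmf')

lemma map_fst_bernoulli_coupling:
  assumes "0 \<le> q" "q \<le> p" "p \<le> 1" "0 < p"
  shows "map_pmf fst (bernoulli_coupling q p) = bernoulli_pmf q"
proof (rule pmf_eqI)
  fix b :: bool
  have "map_pmf fst (bernoulli_coupling q p)
      = bind_pmf (bernoulli_pmf p) (\<lambda>b. map_pmf (\<lambda>a. a \<and> b) (bernoulli_pmf (q / p)))"
    unfolding bernoulli_coupling_def by (simp add: map_bind_pmf map_pmf_comp)
  then have "pmf (map_pmf fst (bernoulli_coupling q p)) b
      = pmf (bernoulli_pmf (q / p)) b * p + pmf (return_pmf False) b * (1 - p)"
    using assms by (simp add: pmf_bind pmf.map_ident_strong)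
  also have "\<dots> = pmf (bernoulli_pmf q) b"
    using assms by (cases b) (auto simp: field_simps)
  finally show "pmf (map_pmf fst (bernoulli_coupling q p)) b = pmf (bernoulli_pmf q) b" .
qed

lemma bernoulli_coupling_fst_imp_snd: "z \<in> set_pmf (bernoulli_coupling q p) \<Longrightarrow> fst z \<longrightarrow> snd z"
  unfolding bernoulli_coupling_def by auto

lemma measure_distr_le_by_coupling:
  assumes "prob_space P"
    and F1: "F1 \<in> measurable P N1" and F2: "F2 \<in> measurable P N2"
    and A1: "A1 \<in> sets N1" and A2: "A2 \<in> sets N2"
    and "AE z in P. F1 z \<in> A1 \<longrightarrow> F2 z \<in> A2"
  shows "measure (distr P N1 F1) A1 \<le> measure (distr P N2 F2) A2"
proof -
  interpret prob_space P
    by fact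
  have "AE z in P. z \<in> F1 -` A1 \<inter> space P \<longrightarrow> z \<in> F2 -` A2 \<inter> space P"
    using assms(6) by (rule AE_mp) (auto intro: AE_I2)
  then have "prob (F1 -` A1 \<inter> space P) \<le> prob (F2 -` A2 \<inter> space P)"
    using measurable_sets[OF F2 A2] by (rule finite_measure_mono_AE)
  then show ?thesis
    using measure_distr[OF F1 A1] measure_distr[OF F2 A2] by simp
qed

lemma AE_bernoulli_coupling_open_cluster_at_mono:
  "AE z in PiM (lattice_edges :: (int ^ 'd::finite) set set) (\<lambda>_. measure_pmf (bernoulli_coupling q p)).
     \<forall>x. open_cluster_at (\<lambda>e\<in>lattice_edges. fst (z e)) x \<subseteq> open_cluster_at (\<lambda>e\<in>lattice_edges. snd (z e)) x"
proof -
  have "AE z in PiM (lattice_edges :: (int ^ 'd) set set) (\<lambda>_. measure_pmf (bernoulli_coupling q p)).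
      \<forall>e\<in>lattice_edges. z e \<in> set_pmf (bernoulli_coupling q p)"
    using countable_lattice_edges
    by (subst AE_ball_countable) (auto intro!: AE_PiM_component prob_space_measure_pmf AE_measure_pmf)
  then show ?thesis
  proof (rule AE_mp, intro AE_I2 impI allI open_cluster_at_mono)
    fix z :: "(int ^ 'd) set \<Rightarrow> bool \<times> bool"
    assume "\<forall>e\<in>lattice_edges. z e \<in> set_pmf (bernoulli_coupling q p)"
    then show "\<forall>e\<in>lattice_edges. (\<lambda>e\<in>lattice_edges. fst (z e)) e \<longrightarrow> (\<lambda>e\<in>lattice_edges. snd (z e)) e"
      using bernoulli_coupling_fst_imp_snd[of "z e" q p for e] by auto
  qed
qed

lemma measure_infinite_cluster_event_mono:
  assumes "0 \<le> q" "q \<le> p" "p \<le> 1"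
  shows "measure (bond_perc_measure TYPE('d::finite) q) (infinite_cluster_event TYPE('d) q x)
     \<le> measure (bond_perc_measure TYPE('d) p) (infinite_cluster_event TYPE('d) p x)"
proof (cases "q = p")
  case False
  let ?E = "lattice_edges :: (int ^ 'd) set set"
  let ?c = "bernoulli_coupling q p"
  let ?P = "PiM ?E (\<lambda>_. measure_pmf ?c)"
  let ?C = "PiM ?E (\<lambda>_. count_space (UNIV :: bool set))"
  define F1 :: "((int ^ 'd) set \<Rightarrow> bool \<times> bool) \<Rightarrow> (int ^ 'd) set \<Rightarrow> bool"
    where "F1 = (\<lambda>z. \<lambda>e\<in>?E. fst (z e))"
  define F2 :: "((int ^ 'd) set \<Rightarrow> bool \<times> bool) \<Rightarrow> (int ^ 'd) set \<Rightarrow> bool"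
    where "F2 = (\<lambda>z. \<lambda>e\<in>?E. snd (z e))"
  have measurable: "(\<lambda>z. \<lambda>e\<in>?E. g (z e)) \<in> measurable ?P ?C" for g :: "bool \<times> bool \<Rightarrow> bool"
    by (intro measurable_restrict measurable_compose[OF measurable_component_singleton]) simp_all
  have distr_map: "distr ?P ?C (\<lambda>z. \<lambda>e\<in>?E. g (z e)) = PiM ?E (\<lambda>_. measure_pmf (map_pmf g ?c))"
    for g :: "bool \<times> bool \<Rightarrow> bool"
    by (subst distr_PiM_map_components[OF lattice_edges_nonempty])
       (simp_all add: prob_space_measure_pmf map_pmf_rep_eq)
  have "0 < p"
    using assms False by simp
  then have "distr ?P ?C F1 = bond_perc_measure TYPE('d) q"
    unfolding F1_def distr_map bond_perc_measure_def using assms by (simp add: map_fst_bernoulli_coupling)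
  moreover have "distr ?P ?C F2 = bond_perc_measure TYPE('d) p"
    unfolding F2_def distr_map bond_perc_measure_def by (simp add: map_snd_bernoulli_coupling)
  moreover have "AE z in ?P. F1 z \<in> infinite_cluster_event TYPE('d) q x
      \<longrightarrow> F2 z \<in> infinite_cluster_event TYPE('d) p x"
    using AE_bernoulli_coupling_open_cluster_at_mono
  proof (rule AE_mp, intro AE_I2 impI)
    fix z
    assume "\<forall>x. open_cluster_at (\<lambda>e\<in>?E. fst (z e)) x \<subseteq> open_cluster_at (\<lambda>e\<in>?E. snd (z e)) x"
      and "F1 z \<in> infinite_cluster_event TYPE('d) q x"
    moreover have "F2 z \<in> space (bond_perc_measure TYPE('d) p)"
      unfolding space_bond_perc_measure F2_def by auto
    ultimately show "F2 z \<in> infinite_cluster_event TYPE('d) p x"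
      using finite_subset unfolding infinite_cluster_event_def F1_def F2_def by blast
  qed
  moreover have "infinite_cluster_event TYPE('d) r x \<in> sets ?C" for r
    using infinite_cluster_event_sets sets_bond_perc_measure by blast
  ultimately show ?thesis
    using measure_distr_le_by_coupling[OF prob_space_PiM[OF prob_space_measure_pmf]
        measurable[of fst, folded F1_def] measurable[of snd, folded F2_def]]
    by simp
qed simp

lemma perc_prob_zero: "perc_prob TYPE('d::finite) 0 = 0"
proof -
  let ?B = "bond_perc_measure TYPE('d) 0"
  have "AE \<omega> in ?B. \<forall>e\<in>(lattice_edges :: (int ^ 'd) set set). \<not> \<omega> e"
    unfolding bond_perc_measure_def using countable_lattice_edges
    by (subst AE_ball_countable)
       (auto intro!: AE_PiM_component prob_space_measure_pmf simp: AE_measure_pmf_iff set_pmf_iff)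
  then have "AE \<omega> in ?B. \<omega> \<notin> infinite_cluster_event TYPE('d) 0 0"
  proof (rule AE_mp, intro AE_I2 impI)
    fix \<omega> :: "(int ^ 'd) set \<Rightarrow> bool"
    assume "\<forall>e\<in>lattice_edges. \<not> \<omega> e"
    then have "open_cluster_at \<omega> 0 \<subseteq> open_cluster_at (\<lambda>_. False) 0"
      by (intro open_cluster_at_mono) simp
    also have "\<dots> \<subseteq> {0}"
    proof
      fix y
      assume "y \<in> open_cluster_at (\<lambda>_. False) 0"
      then obtain q where "lattice_path q 0 y" "path_edges q = []"
        unfolding open_cluster_at_def by auto
      then show "y \<in> {0}"
        by (cases q rule: list.exhaust; cases "tl q") (auto simp: lattice_path_def)
    qed
    finally show "\<omega> \<notin> infinite_cluster_event TYPE('d) 0 0"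
      unfolding infinite_cluster_event_def using finite_subset by auto
  qed
  then have "infinite_cluster_event TYPE('d) 0 0 \<in> null_sets ?B"
    using AE_iff_null_sets[OF infinite_cluster_event_sets] by blast
  then show ?thesis
    unfolding perc_prob_eq_measure_infinite_cluster_event by (simp add: measure_def null_setsD1)
qed

lemma AE_finite_clusters_below_crit_prob:
  assumes "0 \<le> q" "q < crit_prob TYPE('d::finite)"
  shows "AE \<omega> in bond_perc_measure TYPE('d) q. \<forall>x. finite (open_cluster_at (\<omega> :: (int ^ 'd) set \<Rightarrow> bool) x)"
proof -
  let ?B = "bond_perc_measure TYPE('d) q"
  interpret B: prob_space ?B
    by (rule prob_space_bond_perc_measure)
  define S where "S = {p. 0 \<le> p \<and> p \<le> 1 \<and> perc_prob TYPE('d) p = 0}"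
  have "0 \<in> S" "bdd_above S"
    unfolding S_def using perc_prob_zero by (auto intro: bdd_aboveI[where M = 1])
  moreover have "q < Sup S"
    using assms(2) unfolding crit_prob_def S_def .
  ultimately obtain p where "q < p" "p \<le> 1" "perc_prob TYPE('d) p = 0"
    using less_cSup_iff[of S q] unfolding S_def by blast
  then have "measure ?B (infinite_cluster_event TYPE('d) q x) = 0" for x
    using measure_infinite_cluster_event_mono[of q p x] measure_infinite_cluster_event_translate[of p x]
      assms(1) unfolding perc_prob_eq_measure_infinite_cluster_event
    by (simp add: measure_le_0_iff)
  then have "infinite_cluster_event TYPE('d) q x \<in> null_sets ?B" for x
    using infinite_cluster_event_sets B.emeasure_eq_measure
    by (auto simp: null_sets_def)
  then have "\<forall>x. AE \<omega> in ?B. \<omega> \<notin> infinite_cluster_event TYPE('d) q x"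
    using AE_not_in by blast
  then show ?thesis
    unfolding AE_all_countable[symmetric] infinite_cluster_event_def by (auto elim: AE_mp)
qed

section \<open>Fast edges in first-passage percolation\<close>

lemma distr_less_threshold:
  fixes L :: "ennreal measure"
  assumes "prob_space L" and sets_L: "sets L = sets borel"
  shows "distr L (count_space UNIV) (\<lambda>w. w < c) = measure_pmf (bernoulli_pmf (measure L {w. w < c}))"
proof (rule measure_eqI_countable[where A = UNIV])
  interpret prob_space L
    by fact
  have space_L: "space L = UNIV"
    using sets_eq_imp_space_eq[OF sets_L] by simp
  have below: "{w. w < c} \<in> sets L"
    unfolding sets_L by measurable
  have "(\<lambda>w. w < c) \<in> measurable L (count_space UNIV)"
    unfolding measurable_cong_sets[OF sets_L refl] by measurable
  then have "emeasure (distr L (count_space UNIV) (\<lambda>w. w < c)) {b} = emeasure L {w. (w < c) = b}" for b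
    by (simp add: emeasure_distr space_L vimage_def)
  moreover have "emeasure L {w. \<not> w < c} = ennreal (1 - measure L {w. w < c})"
    using prob_compl[OF below] by (simp add: emeasure_eq_measure space_L set_diff_eq)
  ultimately show "emeasure (distr L (count_space UNIV) (\<lambda>w. w < c)) {b}
      = emeasure (measure_pmf (bernoulli_pmf (measure L {w. w < c}))) {b}" for b
    by (cases b) (simp_all add: emeasure_pmf_single emeasure_eq_measure)
qed auto

lemma exists_threshold_measure_less:
  fixes L :: "ennreal measure"
  assumes "prob_space L" and sets_L: "sets L = sets borel" and "measure L {0} < c"
  shows "\<exists>\<delta>>0. measure L {w. w < ennreal \<delta>} < c"
proof -
  interpret prob_space L
    by fact
  define A where "A n = {w. w < ennreal (1 / Suc n)}" for n
  have "range A \<subseteq> sets L"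
    unfolding A_def sets_L by auto
  moreover have "decseq A"
    unfolding A_def decseq_Suc_iff by (auto simp: frac_le elim!: order.strict_trans2)
  moreover have "(\<Inter>n. A n) = {0}"
  proof (intro equalityI subsetI)
    fix w
    assume "w \<in> (\<Inter>n. A n)"
    then have "w < ennreal (1 / Suc n)" for n
      unfolding A_def by blast
    then show "w \<in> {0}"
      by (metis enn2real_less_iff enn2real_positive_iff nat_approx_posE not_less_iff_gr_or_eq
          not_top_less singletonI zero_order(4))
  qed (auto simp: A_def)
  ultimately have "(\<lambda>n. measure L (A n)) \<longlonglongrightarrow> measure L {0}"
    using finite_Lim_measure_decseq by metis
  then have "eventually (\<lambda>n. measure L (A n) < c) sequentially"
    using assms(3) by (rule order_tendstoD(2))
  then obtain n where "measure L (A n) < c"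
    by (auto simp: eventually_sequentially)
  then show ?thesis
    unfolding A_def by (intro exI[of _ "1 / Suc n"]) simp
qed

lemma distr_fast_edges:
  fixes M :: "'a measure" and T :: "(int ^ 'd::finite) set \<Rightarrow> 'a \<Rightarrow> ennreal"
  assumes "prob_space M" and indep: "prob_space.indep_vars M (\<lambda>_. borel) T lattice_edges"
    and distr_T: "\<forall>e \<in> lattice_edges. distr M borel (T e) = L"
    and "prob_space L" "sets L = sets borel"
  shows "(\<lambda>\<omega>. \<lambda>e\<in>lattice_edges. T e \<omega> < c) \<in> measurable M (PiM lattice_edges (\<lambda>_. count_space UNIV))"
    and "distr M (PiM lattice_edges (\<lambda>_. count_space UNIV)) (\<lambda>\<omega>. \<lambda>e\<in>lattice_edges. T e \<omega> < c)
      = bond_perc_measure TYPE('d) (measure L {w. w < c})"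
proof -
  interpret M: prob_space M
    by fact
  have less_c: "(\<lambda>w::ennreal. w < c) \<in> measurable borel (count_space UNIV)"
    by measurable
  have T_measurable: "T e \<in> borel_measurable M" if "e \<in> lattice_edges" for e
    using indep that unfolding M.indep_vars_def by blast
  then have fast_measurable: "(\<lambda>\<omega>. T e \<omega> < c) \<in> measurable M (count_space UNIV)"
    if "e \<in> lattice_edges" for e
    using that less_c by measurable
  then show "(\<lambda>\<omega>. \<lambda>e\<in>lattice_edges. T e \<omega> < c) \<in> measurable M (PiM lattice_edges (\<lambda>_. count_space UNIV))"
    by (rule measurable_restrict)
  have "M.indep_vars (\<lambda>_. count_space UNIV) (\<lambda>e \<omega>. T e \<omega> < c) lattice_edges"
    using M.indep_vars_compose2[OF indep, of "\<lambda>_ w. w < c"] less_c by simp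
  then have "distr M (PiM lattice_edges (\<lambda>_. count_space UNIV)) (\<lambda>\<omega>. \<lambda>e\<in>lattice_edges. T e \<omega> < c)
      = PiM lattice_edges (\<lambda>e. distr M (count_space UNIV) (\<lambda>\<omega>. T e \<omega> < c))"
    using M.indep_vars_iff_distr_eq_PiM'[where X = "\<lambda>e \<omega>. T e \<omega> < c", OF lattice_edges_nonempty fast_measurable]
    by simp
  also have "\<dots> = PiM lattice_edges (\<lambda>_. measure_pmf (bernoulli_pmf (measure L {w. w < c})))"
  proof (intro PiM_cong refl)
    fix e :: "(int ^ 'd) set"
    assume "e \<in> lattice_edges"
    then have "distr M (count_space UNIV) (\<lambda>\<omega>. T e \<omega> < c) = distr L (count_space UNIV) (\<lambda>w. w < c)"
      using distr_distr[OF less_c T_measurable] distr_T by (simp add: comp_def)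
    also have "\<dots> = measure_pmf (bernoulli_pmf (measure L {w. w < c}))"
      using distr_less_threshold \<open>prob_space L\<close> \<open>sets L = sets borel\<close> by blast
    finally show "distr M (count_space UNIV) (\<lambda>\<omega>. T e \<omega> < c) = measure_pmf (bernoulli_pmf (measure L {w. w < c}))" .
  qed
  finally show "distr M (PiM lattice_edges (\<lambda>_. count_space UNIV)) (\<lambda>\<omega>. \<lambda>e\<in>lattice_edges. T e \<omega> < c)
      = bond_perc_measure TYPE('d) (measure L {w. w < c})"
    unfolding bond_perc_measure_def .
qed

theorem propositionA1:
  fixes M :: "'a measure" and L :: "ennreal measure"
    and T :: "(int ^ 'd) set \<Rightarrow> 'a \<Rightarrow> ennreal"
  assumes "CARD('d) \<ge> 2"
    and "prob_space M"
    and "prob_space.indep_vars M (\<lambda>_. borel) T (lattice_edges :: (int ^ 'd) set set)"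
    and "\<forall>e \<in> lattice_edges. distr M borel (T e) = L"
    and "measure L {0} < crit_prob TYPE('d)"
  shows "AE \<omega> in M. \<forall>x y. passage_time (\<lambda>e. T e \<omega>) x y < \<infinity> \<longrightarrow>
            (\<exists>g. geodesic (\<lambda>e. T e \<omega>) g x y)"
proof -
  interpret M: prob_space M
    by fact
  obtain e0 :: "(int ^ 'd) set" where "e0 \<in> lattice_edges"
    using lattice_edges_nonempty by blast
  then have "L = distr M borel (T e0)" "T e0 \<in> borel_measurable M"
    using assms(3,4) unfolding M.indep_vars_def by auto
  then have L: "prob_space L" "sets L = sets borel"
    by (auto intro: M.prob_space_distr)
  then obtain \<delta> :: real where "\<delta> > 0" and below_crit: "measure L {w. w < ennreal \<delta>} < crit_prob TYPE('d)"
    using exists_threshold_measure_less assms(5) by blast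
  note fast = distr_fast_edges[OF assms(2,3,4) L, of "ennreal \<delta>"]
  have "AE \<omega> in M. \<forall>x. finite (open_cluster_at (\<lambda>e\<in>lattice_edges. T e \<omega> < ennreal \<delta>) x)"
    using AE_distrD[OF fast(1)] AE_finite_clusters_below_crit_prob[OF measure_nonneg below_crit]
    unfolding fast(2) by blast
  then show ?thesis
  proof (rule AE_mp, intro AE_I2 impI allI)
    fix \<omega> x y
    assume "\<forall>x. finite (open_cluster_at (\<lambda>e\<in>lattice_edges. T e \<omega> < ennreal \<delta>) x)"
      and "passage_time (\<lambda>e. T e \<omega>) x y < \<infinity>"
    then show "\<exists>g. geodesic (\<lambda>e. T e \<omega>) g x y"
      by (intro geodesic_exists_if_fast_clusters_finite[OF \<open>\<delta> > 0\<close>]) (simp_all add: open_cluster_at_restrict)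
  qed
qed

end
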